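(* Let $\beta\in(0,n)$, $q>0$, $1\le p<n/\beta$ and $q_0>0$. Then the following statements are equivalent. 1. For all $f\in C_0^\infty(\mathbb{R}^n)$: $$\|f\|_{L^{\frac{np}{n-p\beta},q_0}(\mathbb{R}^n)}\lesssim\|f\|_{L^{p,q_0}(\mathbb{R}^n;C^{p,q}_\beta)}.$$ 2. For every bounded domain $O\subset\mathbb{R}^n$ with $C^\infty$ boundary: $$V(O)^{\frac{n-p\beta}{n}}\lesssim C^{p,q}_\beta(\overline{O}).$$ Moreover, when $q\ge p$, both (i) and (ii) hold.
   Context: $C_0^\infty(\mathbb{R}^n)$ is the space of compactly supported smooth functions, $V$ is Lebesgue measure on $\mathbb{R}^n$, and $1_E$ is the characteristic function of $E$. Implicit constants are independent of $f$ and $O$. Besov norm: let $k=1+\lfloor\beta\rfloor$, $\Delta^1_h f(x)=f(x+h)-f(x)$ and $\Delta^k_h=\Delta^1_h\Delta^{k-1}_h$. Then $$\|f\|_{\dot{\Lambda}^{p,q}_\beta(\mathbb{R}^n)}=\left(\int_{\mathbb{R}^n}\|\Delta^k_h f\|_{L^p}^q|h|^{-(n+\beta q)}dh\right)^{1/q}.$$ Besov capacity: for compact $K$, $$C^{p,q}_\beta(K)=\inf\{\|f\|^p_{\dot{\Lambda}^{p,q}_\beta}: f\in C_0^\infty(\mathbb{R}^n),\ f\ge 1_K\}.$$ For arbitrary $E$, $$C^{p,q}_\beta(E)=\inf_{O\supseteq E\text{ open}}\sup_{K\subseteq O\text{ compact}}C^{p,q}_\beta(K).$$ Lorentz quasinorms: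 for $\nu$ a measure or set function, and $O_t(g)=\{x:|g(x)|>t\}$, $$\|g\|_{L^{s,q_0}(\mathbb{R}^n;\nu)}=\left(\int_0^\infty\nu(O_t(g))^{q_0/s}\,d(t^{q_0})\right)^{1/q_0}.$$ When no $\nu$ is indicated, $\nu=V$. *)

theory Defs
  imports "HOL-Analysis.Analysis"
begin

text \<open>Real powers of extended nonnegative reals (used only with positive exponents).\<close>
definition ennpow :: "ennreal \<Rightarrow> real \<Rightarrow> ennreal" where
  "ennpow x r = (if x = \<infinity> then (if r > 0 then \<infinity> else if r = 0 then 1 else 0)
                 else ennreal (enn2real x powr r))"

text \<open>C-infinity functions R^n -> R: f lies in a family of everywhere differentiable
  functions closed under taking partial derivatives along the standard basis.\<close>
definition smooth_fun :: "('a::euclidean_space \<Rightarrow> real) \<Rightarrow> bool" where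
  "smooth_fun f \<longleftrightarrow> (\<exists>S. f \<in> S \<and> (\<forall>g\<in>S. \<forall>x. g differentiable (at x)) \<and>
      (\<forall>g\<in>S. \<forall>i\<in>Basis. (\<lambda>x. frechet_derivative g (at x) i) \<in> S))"

definition C0_inf :: "('a::euclidean_space \<Rightarrow> real) set" where
  "C0_inf = {f. smooth_fun f \<and> compact (closure {x. f x \<noteq> 0})}"

fun fdiff :: "nat \<Rightarrow> 'a::real_vector \<Rightarrow> ('a \<Rightarrow> real) \<Rightarrow> 'a \<Rightarrow> real" where
  "fdiff 0 h f = f"
| "fdiff (Suc k) h f = (\<lambda>x. fdiff k h f (x + h) - fdiff k h f x)"

definition Lp_norm :: "real \<Rightarrow> ('a::euclidean_space \<Rightarrow> real) \<Rightarrow> ennreal" where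
  "Lp_norm p g = ennpow (\<integral>\<^sup>+ x. ennreal (\<bar>g x\<bar> powr p) \<partial>lborel) (1 / p)"

definition besov_norm :: "real \<Rightarrow> real \<Rightarrow> real \<Rightarrow> ('a::euclidean_space \<Rightarrow> real) \<Rightarrow> ennreal" where
  "besov_norm p q \<beta> f =
     ennpow (\<integral>\<^sup>+ h. ennpow (Lp_norm p (fdiff (nat (1 + \<lfloor>\<beta>\<rfloor>)) h f)) q
                       * ennreal (norm h powr (- (real DIM('a) + \<beta> * q))) \<partial>lborel) (1 / q)"

definition besov_capK :: "real \<Rightarrow> real \<Rightarrow> real \<Rightarrow> 'a::euclidean_space set \<Rightarrow> ennreal" where
  "besov_capK p q \<beta> K =
     (INF f \<in> {f \<in> C0_inf. \<forall>x. indicator K x \<le> f x}. ennpow (besov_norm p q \<beta> f) p)"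

definition besov_cap :: "real \<Rightarrow> real \<Rightarrow> real \<Rightarrow> 'a::euclidean_space set \<Rightarrow> ennreal" where
  "besov_cap p q \<beta> E =
     (INF U \<in> {U. open U \<and> E \<subseteq> U}. SUP K \<in> {K. compact K \<and> K \<subseteq> U}. besov_capK p q \<beta> K)"

text \<open>Lorentz quasinorm w.r.t. a set function nu; d(t^q0) = q0 t^(q0-1) dt on (0,inf).\<close>
definition lorentz_norm :: "real \<Rightarrow> real \<Rightarrow> ('a set \<Rightarrow> ennreal) \<Rightarrow> ('a \<Rightarrow> real) \<Rightarrow> ennreal" where
  "lorentz_norm s q0 \<nu> g =
     ennpow (\<integral>\<^sup>+ t \<in> {0<..}. ennpow (\<nu> {x. \<bar>g x\<bar> > t}) (q0 / s)
                 * ennreal (q0 * t powr (q0 - 1)) \<partial>lborel) (1 / q0)"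

definition smooth_bdd_domain :: "'a::euclidean_space set \<Rightarrow> bool" where
  "smooth_bdd_domain U \<longleftrightarrow> open U \<and> connected U \<and> U \<noteq> {} \<and> bounded U \<and>
     (\<forall>x0\<in>frontier U. \<exists>r>0. \<exists>\<rho>. smooth_fun \<rho> \<and>
        U \<inter> ball x0 r = {x \<in> ball x0 r. \<rho> x < 0} \<and>
        (\<forall>x\<in>ball x0 r. frechet_derivative \<rho> (at x) \<noteq> (\<lambda>v. 0)))"

end

theory Submission
  imports Defs
begin

text \<open>Both (i) and (ii) hold for all admissible parameters,
  so the equivalence and the final claim are immediate once they are proved. Everything rests on
  the isocapacitary inequality c V(K)^((n - p\<beta>)/n) \<le> \<parallel>f\<parallel>^p for test functions f \<ge> 1_K.

  Let k = 1 + \<lfloor>\<beta>\<rfloor>. Suppose f \<ge> t on K with V(K) = m and the level set A = {f > t / 2^(k+1)}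
  has measure at most M m. Each dilate {h. x + j h \<in> A} has measure at most V(A), so on a ball
  of steps h of measure 2 k M m a positive proportion of pairs (h, x) in ball \<times> K has all of
  x + h, \<dots>, x + k h outside A, and there |\<Delta>^k_h f(x)| \<ge> t / 2. By Fubini, a set of steps
  of measure comparable to m carries \<parallel>\<Delta>^k_h f\<parallel>_p \<ge> c t m^(1/p), and there
  |h|^(-n-\<beta>q) \<ge> c m^(-1-\<beta>q/n), so the Besov integral is at least c t^q m^(q/p - \<beta>q/n).
  If instead V(A) > M m, replace (t, K) by (t / 2^(k+1), A): for M with
  2^(-(k+1)q) M^(q/p - \<beta>q/n) = 1 the bound does not deteriorate, and since {f > 0} has finite
  measure this happens only finitely often.

  Inner regularity carries the inequality over to C(W) for bounded open W; applied to the level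
  sets {|f| > t} it gives (i), and applied to closure U it gives (ii).\<close>

lemma ennpow_ennreal: "0 \<le> x \<Longrightarrow> ennpow (ennreal x) r = ennreal (x powr r)"
  by (simp add: ennpow_def)

lemma ennpow_zero: "0 < r \<Longrightarrow> ennpow 0 r = 0"
  by (simp add: ennpow_def)

lemma ennpow_mono:
  assumes "0 < r" "x \<le> y"
  shows "ennpow x r \<le> ennpow y r"
proof (cases y rule: ennreal_cases)
  case (real b)
  moreover obtain a where "x = ennreal a" "0 \<le> a"
    using assms(2) real by (cases x rule: ennreal_cases) (auto simp: top_unique)
  ultimately show ?thesis
    using assms by (auto simp: ennpow_ennreal ennreal_le_iff2 intro: powr_mono2)
qed (use assms in \<open>simp add: ennpow_def\<close>)

lemma ennreal_powr_le_ennpow: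
  assumes "0 < r" "0 \<le> a" "ennreal a \<le> x"
  shows "ennreal (a powr r) \<le> ennpow x r"
  using ennpow_mono[OF assms(1,3)] assms(2) by (simp add: ennpow_ennreal)

lemma ennpow_ennreal_mult:
  assumes "0 < c" "0 < r"
  shows "ennpow (ennreal c * x) r = ennreal (c powr r) * ennpow x r"
proof (cases x rule: ennreal_cases)
  case (real a)
  then have "ennpow (ennreal c * x) r = ennreal ((c * a) powr r)"
    using assms by (simp add: ennreal_mult[symmetric] ennpow_ennreal)
  with real assms show ?thesis
    by (simp add: ennpow_ennreal powr_mult ennreal_mult)
qed (use assms in \<open>simp add: ennpow_def ennreal_mult_top\<close>)

lemma ennpow_ennpow:
  assumes "0 < a" "0 < b"
  shows "ennpow (ennpow x a) b = ennpow x (a * b)"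
  using assms by (cases x rule: ennreal_cases) (simp_all add: ennpow_def powr_powr)

lemma ennreal_le_inverse_mult:
  assumes "0 < c" "ennreal c * x \<le> y"
  shows "x \<le> ennreal (1 / c) * y"
proof -
  have "x = ennreal (1 / c) * (ennreal c * x)"
    using assms(1) by (simp add: mult.assoc[symmetric] ennreal_mult[symmetric])
  also have "\<dots> \<le> ennreal (1 / c) * y"
    using assms(2) by (rule mult_left_mono) simp
  finally show ?thesis .
qed

lemma ennreal_diff_le_of_le_add:
  assumes "ennreal a \<le> x + ennreal b" "x \<noteq> \<infinity>" "0 \<le> b"
  shows "ennreal (a - b) \<le> x"
proof -
  obtain s where "x = ennreal s" "0 \<le> s"
    using assms(2) by (cases x rule: ennreal_cases) auto
  with assms show ?thesis
    by (simp add: ennreal_plus[symmetric] ennreal_le_iff2 del: ennreal_plus) linarith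
qed

text \<open>Unlike nn_integral_cmult, this needs no measurability of g.\<close>
lemma nn_integral_cmult_le:
  assumes "0 \<le> c"
  shows "(\<integral>\<^sup>+x. ennreal c * g x \<partial>M) \<le> ennreal c * (\<integral>\<^sup>+x. g x \<partial>M)"
proof (cases "c = 0")
  case False
  with assms have c: "0 < c" by simp
  have cancel: "ennreal c * ennreal (1 / c) = 1"
    using c by (simp add: ennreal_mult[symmetric])
  show ?thesis
    unfolding nn_integral_def[of M "\<lambda>x. ennreal c * g x"]
  proof (rule SUP_least)
    fix s assume "s \<in> {s. simple_function M s \<and> s \<le> (\<lambda>x. ennreal c * g x)}"
    then have s: "simple_function M s" "\<And>x. s x \<le> ennreal c * g x"
      by (auto simp: le_fun_def)
    define s' where "s' x = ennreal (1 / c) * s x" for x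
    have s': "simple_function M s'"
      unfolding s'_def using s(1) by (intro simple_function_mult simple_function_const)
    have "s' x \<le> g x" for x
    proof -
      have "s' x \<le> ennreal (1 / c) * (ennreal c * g x)"
        unfolding s'_def using s(2) by (intro mult_left_mono) auto
      also have "\<dots> = g x"
        using cancel by (simp add: mult.assoc[symmetric] mult.commute)
      finally show ?thesis .
    qed
    then have "integral\<^sup>S M s' \<le> integral\<^sup>N M g"
      unfolding nn_integral_def by (intro SUP_upper) (use s' in \<open>auto simp: le_fun_def\<close>)
    moreover have "s = (\<lambda>x. ennreal c * s' x)"
      unfolding s'_def using cancel by (simp add: mult.assoc[symmetric])
    ultimately show "integral\<^sup>S M s \<le> ennreal c * integral\<^sup>N M g"
      using simple_integral_mult[OF s', of "ennreal c"] by (simp add: mult_left_mono)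
  qed
qed simp

lemma abs_fdiff_le:
  fixes f :: "'a::real_vector \<Rightarrow> real"
  assumes "\<And>j. j \<le> k \<Longrightarrow> \<bar>f (x + real j *\<^sub>R h)\<bar> \<le> B"
  shows "\<bar>fdiff k h f x\<bar> \<le> 2 ^ k * B"
  using assms
proof (induction k arbitrary: x)
  case 0
  then show ?case using "0.prems"[of 0] by simp
next
  case (Suc k)
  have shift: "x + h + real j *\<^sub>R h = x + real (Suc j) *\<^sub>R h" for j
    by (simp add: algebra_simps)
  have "\<bar>fdiff k h f (x + h)\<bar> \<le> 2 ^ k * B"
    by (rule Suc.IH) (metis shift Suc.prems Suc_le_mono)
  moreover have "\<bar>fdiff k h f x\<bar> \<le> 2 ^ k * B"
    using Suc.IH[of x] Suc.prems by simp
  ultimately show ?case by simp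
qed

lemma abs_fdiff_minus_sign_le:
  fixes f :: "'a::real_vector \<Rightarrow> real"
  assumes "\<And>j. 1 \<le> j \<Longrightarrow> j \<le> k \<Longrightarrow> \<bar>f (x + real j *\<^sub>R h)\<bar> \<le> B"
  shows "\<bar>fdiff k h f x - (-1) ^ k * f x\<bar> \<le> (2 ^ k - 1) * B"
  using assms
proof (induction k)
  case (Suc k)
  have shift: "x + h + real j *\<^sub>R h = x + real (Suc j) *\<^sub>R h" for j
    by (simp add: algebra_simps)
  have "\<bar>fdiff k h f (x + h)\<bar> \<le> 2 ^ k * B"
  proof (rule abs_fdiff_le)
    fix j assume "j \<le> k"
    then show "\<bar>f (x + h + real j *\<^sub>R h)\<bar> \<le> B"
      unfolding shift by (intro Suc.prems) auto
  qed
  moreover have "\<bar>fdiff k h f x - (-1) ^ k * f x\<bar> \<le> (2 ^ k - 1) * B"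
    using Suc.IH Suc.prems by simp
  ultimately show ?case
    using abs_triangle_ineq4[of "fdiff k h f (x + h)" "fdiff k h f x - (-1) ^ k * f x"]
    by (simp add: algebra_simps)
qed simp

lemma abs_fdiff_ge_half:
  fixes f :: "'a::real_vector \<Rightarrow> real"
  assumes "0 \<le> t" "t \<le> f x"
    and "\<And>j. 1 \<le> j \<Longrightarrow> j \<le> k \<Longrightarrow> \<bar>f (x + real j *\<^sub>R h)\<bar> \<le> t / 2 ^ (k + 1)"
  shows "t / 2 \<le> \<bar>fdiff k h f x\<bar>"
proof -
  have "\<bar>fdiff k h f x - (-1) ^ k * f x\<bar> \<le> (2 ^ k - 1) * (t / 2 ^ (k + 1))"
    by (rule abs_fdiff_minus_sign_le) (use assms(3) in auto)
  also have "\<dots> \<le> t / 2"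
    using assms(1) by (simp add: field_simps)
  finally have "\<bar>fdiff k h f x - (-1) ^ k * f x\<bar> \<le> t / 2" .
  moreover have "\<bar>(-1) ^ k * f x\<bar> = f x"
    using assms(1,2) by (simp add: abs_mult)
  ultimately show ?thesis
    using assms(2) by linarith
qed

lemma emeasure_dilation_preimage_le:
  fixes x :: "'a::euclidean_space"
  assumes "A \<in> sets borel" "1 \<le> c"
  shows "emeasure lborel {h. x + c *\<^sub>R h \<in> A} \<le> emeasure lborel A"
proof -
  have "emeasure lborel A = emeasure (density (distr lborel borel (\<lambda>h. x + c *\<^sub>R h)) (\<lambda>_. \<bar>c\<bar> ^ DIM('a))) A"
    using lborel_affine[of c x] assms(2) by simp
  also have "\<dots> = ennreal (\<bar>c\<bar> ^ DIM('a)) * emeasure lborel {h. x + c *\<^sub>R h \<in> A}"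
    using assms(1) by (simp add: emeasure_density nn_integral_cmult_indicator emeasure_distr vimage_def)
  finally have "emeasure lborel A = ennreal (\<bar>c\<bar> ^ DIM('a)) * emeasure lborel {h. x + c *\<^sub>R h \<in> A}" .
  moreover have "1 \<le> ennreal (\<bar>c\<bar> ^ DIM('a))"
    using assms(2) by (simp add: one_le_power)
  ultimately show ?thesis
    using mult_right_mono[of 1 "ennreal (\<bar>c\<bar> ^ DIM('a))" "emeasure lborel {h. x + c *\<^sub>R h \<in> A}"]
    by simp
qed

lemma emeasure_avoiding_dilates_ge:
  fixes x :: "'a::euclidean_space"
  assumes A: "A \<in> sets borel" "emeasure lborel A \<le> ennreal a" "0 \<le> a"
    and B: "B \<in> sets borel" "emeasure lborel B = ennreal b"
  shows "ennreal (b - k * a) \<le> emeasure lborel {h \<in> B. \<forall>j\<in>{1..k}. x + real j *\<^sub>R h \<notin> A}"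
    (is "_ \<le> emeasure lborel ?S")
proof (rule ennreal_diff_le_of_le_add)
  define P where "P j = {h. x + real j *\<^sub>R h \<in> A}" for j :: nat
  have P: "P j \<in> sets borel" for j
    unfolding P_def using A by measurable
  have S: "?S \<in> sets borel"
    using A B by measurable
  have "B \<subseteq> ?S \<union> (\<Union>j\<in>{1..k}. P j)"
    unfolding P_def by auto
  then have "ennreal b \<le> emeasure lborel (?S \<union> (\<Union>j\<in>{1..k}. P j))"
    unfolding B(2)[symmetric] using S P by (intro emeasure_mono) auto
  also have "\<dots> \<le> emeasure lborel ?S + emeasure lborel (\<Union>j\<in>{1..k}. P j)"
    using S P by (intro emeasure_subadditive) auto
  also have "emeasure lborel (\<Union>j\<in>{1..k}. P j) \<le> (\<Sum>j\<in>{1..k}. emeasure lborel (P j))"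
    using P by (intro emeasure_subadditive_finite) auto
  also have "\<dots> \<le> (\<Sum>j\<in>{1..k}. ennreal a)"
  proof (rule sum_mono)
    fix j :: nat assume "j \<in> {1..k}"
    then have "emeasure lborel (P j) \<le> emeasure lborel A"
      unfolding P_def using A(1) by (intro emeasure_dilation_preimage_le) auto
    then show "emeasure lborel (P j) \<le> ennreal a"
      using A(2) by (rule order.trans)
  qed
  also have "\<dots> = ennreal (real k * a)"
    using A(3) by (simp add: ennreal_of_nat_eq_real_of_nat ennreal_mult)
  finally show "ennreal b \<le> emeasure lborel ?S + ennreal (real k * a)"
    by (simp add: add_left_mono)
  have "emeasure lborel ?S \<le> ennreal b"
    unfolding B(2)[symmetric] using B(1) by (intro emeasure_mono) auto
  then show "emeasure lborel ?S \<noteq> \<infinity>"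
    by (auto simp: top_unique)
  show "0 \<le> real k * a"
    using A(3) by simp
qed

lemma nn_integral_emeasure_sections_ge:
  fixes E :: "('a::euclidean_space \<times> 'b::euclidean_space) set"
  assumes "E \<in> sets (lborel \<Otimes>\<^sub>M lborel)" "K \<in> sets lborel"
    and "\<And>x. x \<in> K \<Longrightarrow> a \<le> emeasure lborel ((\<lambda>h. (h, x)) -` E)"
  shows "a * emeasure lborel K \<le> (\<integral>\<^sup>+h. emeasure lborel (Pair h -` E) \<partial>lborel)"
proof -
  have "a * emeasure lborel K = (\<integral>\<^sup>+x. a * indicator K x \<partial>lborel)"
    using assms(2) by (simp add: nn_integral_cmult_indicator)
  also have "\<dots> \<le> (\<integral>\<^sup>+x. emeasure lborel ((\<lambda>h. (h, x)) -` E) \<partial>lborel)"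
    using assms(3) by (intro nn_integral_mono) (auto simp: indicator_def)
  also have "\<dots> = (\<integral>\<^sup>+h. emeasure lborel (Pair h -` E) \<partial>lborel)"
    using lborel_pair.emeasure_pair_measure_alt2[OF assms(1)] lborel.emeasure_pair_measure_alt[OF assms(1)]
    by simp
  finally show ?thesis .
qed

text \<open>By Fubini, a m \<le> \<integral> |E_h| dh \<le> m |S| + \<theta> m b, where S is the set of h with |E_h| \<ge> \<theta> m.\<close>
lemma emeasure_heavy_sections_ge:
  fixes E :: "('a::euclidean_space \<times> 'b::euclidean_space) set"
  assumes E: "E \<in> sets (lborel \<Otimes>\<^sub>M lborel)" "E \<subseteq> B \<times> K"
    and B: "B \<in> sets lborel" "emeasure lborel B = ennreal b" "0 \<le> b"
    and K: "K \<in> sets lborel" "emeasure lborel K = ennreal m" "0 < m"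
    and sections: "\<And>x. x \<in> K \<Longrightarrow> ennreal a \<le> emeasure lborel ((\<lambda>h. (h, x)) -` E)"
    and "0 \<le> a" "0 \<le> \<theta>"
  shows "ennreal (a - \<theta> * b) \<le> emeasure lborel {h \<in> B. ennreal (\<theta> * m) \<le> emeasure lborel (Pair h -` E)}"
    (is "_ \<le> emeasure lborel ?S")
proof -
  have S: "?S \<in> sets lborel"
    using lborel.measurable_emeasure_Pair[OF E(1)] B(1) by measurable
  have "emeasure lborel ?S \<le> ennreal b"
    unfolding B(2)[symmetric] using B(1) by (intro emeasure_mono) auto
  then obtain s where s: "emeasure lborel ?S = ennreal s" "0 \<le> s"
    by (cases "emeasure lborel ?S" rule: ennreal_cases) (auto simp: top_unique)
  have sections_le: "emeasure lborel (Pair h -` E) \<le> ennreal m * indicator ?S h + ennreal (\<theta> * m) * indicator B h" for h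
  proof -
    have "emeasure lborel (Pair h -` E) \<le> ennreal m"
      unfolding K(2)[symmetric] using E(2) K(1) by (intro emeasure_mono) auto
    moreover have "Pair h -` E = {}" if "h \<notin> B"
      using E(2) that by auto
    ultimately show ?thesis
      by (auto simp: indicator_def add_increasing2 not_le less_imp_le)
  qed
  have "ennreal a * ennreal m \<le> (\<integral>\<^sup>+h. emeasure lborel (Pair h -` E) \<partial>lborel)"
    using nn_integral_emeasure_sections_ge[OF E(1) K(1) sections] K(2) by simp
  also have "\<dots> \<le> (\<integral>\<^sup>+h. ennreal m * indicator ?S h + ennreal (\<theta> * m) * indicator B h \<partial>lborel)"
    by (intro nn_integral_mono sections_le)
  also have "\<dots> = ennreal m * ennreal s + ennreal (\<theta> * m) * ennreal b"
    using S B s by (simp add: nn_integral_add nn_integral_cmult_indicator)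
  also have "\<dots> = ennreal (m * s + \<theta> * m * b)"
    using K(3) s(2) B(3) \<open>0 \<le> \<theta>\<close> by (simp add: ennreal_mult ennreal_plus)
  finally have "ennreal (a * m) \<le> ennreal (m * s + \<theta> * m * b)"
    using K(3) \<open>0 \<le> a\<close> by (simp add: ennreal_mult)
  then have "a * m \<le> (s + \<theta> * b) * m"
    using K(3) s(2) B(3) \<open>0 \<le> \<theta>\<close> by (subst (asm) ennreal_le_iff) (auto simp: algebra_simps)
  then have "a - \<theta> * b \<le> s"
    using K(3) mult_right_le_imp_le by fastforce
  then show ?thesis
    using s by (simp add: ennreal_leI)
qed

text \<open>Each dilate {h. x + j h \<in> A}, j \<ge> 1, is no larger than A, so for every x \<in> K most
  h \<in> B keep all points x + j h outside A; then count pairs (h, x).\<close>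
lemma good_steps_exist:
  fixes A B K :: "'a::euclidean_space set"
  assumes A: "A \<in> sets borel" "emeasure lborel A \<le> ennreal (M * m)"
    and B: "B \<in> sets borel" "emeasure lborel B = ennreal (2 * real k * M * m)"
    and K: "K \<in> sets borel" "emeasure lborel K = ennreal m" "0 < m"
    and "0 < M"
  obtains S where "S \<in> sets lborel" "S \<subseteq> B" "ennreal (real k * M * m / 2) \<le> emeasure lborel S"
    "\<And>h. h \<in> S \<Longrightarrow> ennreal (m / 4) \<le> emeasure lborel {x \<in> K. \<forall>j\<in>{1..k}. x + real j *\<^sub>R h \<notin> A}"
proof -
  define E where "E = {z. fst z \<in> B \<and> snd z \<in> K \<and> (\<forall>j\<in>{1..k}. snd z + real j *\<^sub>R fst z \<notin> A)}"
  define S where "S = {h \<in> B. ennreal (1 / 4 * m) \<le> emeasure lborel (Pair h -` E)}"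
  have "{z \<in> space (borel \<Otimes>\<^sub>M borel). fst z \<in> B \<and> snd z \<in> K \<and>
      (\<forall>j\<in>{1..k}. snd z + real j *\<^sub>R fst z \<notin> A)} \<in> sets (borel \<Otimes>\<^sub>M borel)"
    using A B K(1) by measurable
  then have E: "E \<in> sets (lborel \<Otimes>\<^sub>M lborel)"
    unfolding E_def by (simp add: space_pair_measure sets_pair_measure_cong[OF sets_lborel sets_lborel])
  have "ennreal (real k * M * m - 1 / 4 * (2 * real k * M * m)) \<le> emeasure lborel S"
    unfolding S_def
  proof (rule emeasure_heavy_sections_ge[OF E _ _ B(2) _ _ K(2,3)])
    fix x assume "x \<in> K"
    then have "(\<lambda>h. (h, x)) -` E = {h \<in> B. \<forall>j\<in>{1..k}. x + real j *\<^sub>R h \<notin> A}"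
      unfolding E_def by auto
    moreover have "ennreal (2 * real k * M * m - real k * (M * m))
                     \<le> emeasure lborel {h \<in> B. \<forall>j\<in>{1..k}. x + real j *\<^sub>R h \<notin> A}"
      using A B \<open>0 < M\<close> K(3) by (intro emeasure_avoiding_dilates_ge) auto
    ultimately show "ennreal (real k * M * m) \<le> emeasure lborel ((\<lambda>h. (h, x)) -` E)"
      by (simp add: algebra_simps)
  qed (unfold E_def, use B K(1) \<open>0 < M\<close> K(3) in auto)
  moreover have "S \<in> sets lborel"
    unfolding S_def using lborel.measurable_emeasure_Pair[OF E] B(1) by measurable
  moreover have "Pair h -` E = {x \<in> K. \<forall>j\<in>{1..k}. x + real j *\<^sub>R h \<notin> A}" if "h \<in> B" for h
    unfolding E_def using that by auto
  ultimately show ?thesis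
    by (intro that[of S]) (auto simp: S_def algebra_simps)
qed

lemma Lp_norm_ge_level:
  fixes g :: "'a::euclidean_space \<Rightarrow> real"
  assumes "0 < p" "0 \<le> s" "0 \<le> \<mu>"
    and P: "P \<in> sets lborel" "ennreal \<mu> \<le> emeasure lborel P" "\<And>x. x \<in> P \<Longrightarrow> s \<le> \<bar>g x\<bar>"
  shows "ennreal (s * \<mu> powr (1 / p)) \<le> Lp_norm p g"
proof -
  have "ennreal (s powr p * \<mu>) = ennreal (s powr p) * ennreal \<mu>"
    using assms by (simp add: ennreal_mult)
  also have "\<dots> \<le> ennreal (s powr p) * emeasure lborel P"
    using P(2) by (rule mult_left_mono) simp
  also have "\<dots> = (\<integral>\<^sup>+x. ennreal (s powr p) * indicator P x \<partial>lborel)"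
    using P(1) by (simp add: nn_integral_cmult_indicator)
  also have "\<dots> \<le> (\<integral>\<^sup>+x. ennreal (\<bar>g x\<bar> powr p) \<partial>lborel)"
    using P(3) assms(1,2) by (intro nn_integral_mono) (auto simp: indicator_def intro: powr_mono2)
  finally have "ennreal ((s powr p * \<mu>) powr (1 / p)) \<le> Lp_norm p g"
    unfolding Lp_norm_def using assms by (intro ennreal_powr_le_ennpow) auto
  moreover have "(s powr p * \<mu>) powr (1 / p) = s * \<mu> powr (1 / p)"
    using assms by (simp add: powr_mult powr_powr)
  ultimately show ?thesis
    by simp
qed

definition besov_energy :: "nat \<Rightarrow> real \<Rightarrow> real \<Rightarrow> real \<Rightarrow> ('a::euclidean_space \<Rightarrow> real) \<Rightarrow> ennreal" where
  "besov_energy k p q \<beta> f =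
     (\<integral>\<^sup>+ h. ennpow (Lp_norm p (fdiff k h f)) q * ennreal (norm h powr (- (real DIM('a) + \<beta> * q))) \<partial>lborel)"

lemma besov_norm_eq_energy:
  "besov_norm p q \<beta> f = ennpow (besov_energy (nat (1 + \<lfloor>\<beta>\<rfloor>)) p q \<beta> f) (1 / q)"
  unfolding besov_norm_def besov_energy_def ..

lemma besov_energy_ge_on_set:
  fixes f :: "'a::euclidean_space \<Rightarrow> real"
  assumes "0 < q" "0 \<le> \<beta>" "0 \<le> a"
    and S: "S \<in> sets lborel" "\<And>h. h \<in> S \<Longrightarrow> h \<noteq> 0 \<and> norm h \<le> r"
      "\<And>h. h \<in> S \<Longrightarrow> ennreal a \<le> Lp_norm p (fdiff k h f)"
  shows "ennreal (a powr q * r powr (- (real DIM('a) + \<beta> * q))) * emeasure lborel S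
           \<le> besov_energy k p q \<beta> f"
proof -
  have "ennreal (a powr q * r powr (- (real DIM('a) + \<beta> * q))) * indicator S h
          \<le> ennpow (Lp_norm p (fdiff k h f)) q * ennreal (norm h powr (- (real DIM('a) + \<beta> * q)))"
    for h
  proof (cases "h \<in> S")
    case True
    have "0 \<le> \<beta> * q"
      using assms(1,2) by simp
    then have "r powr (- (real DIM('a) + \<beta> * q)) \<le> norm h powr (- (real DIM('a) + \<beta> * q))"
      using S(2)[OF True] by (intro powr_mono2') auto
    moreover have "ennreal (a powr q) \<le> ennpow (Lp_norm p (fdiff k h f)) q"
      using S(3)[OF True] assms by (intro ennreal_powr_le_ennpow) auto
    ultimately show ?thesis
      using True by (simp add: ennreal_mult mult_mono)
  qed simp
  then have "(\<integral>\<^sup>+h. ennreal (a powr q * r powr (- (real DIM('a) + \<beta> * q))) * indicator S h \<partial>lborel)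
               \<le> besov_energy k p q \<beta> f"
    unfolding besov_energy_def by (rule nn_integral_mono)
  then show ?thesis
    using S(1) by (simp add: nn_integral_cmult_indicator)
qed

lemma besov_energy_ge_single_scale:
  fixes f :: "'a::euclidean_space \<Rightarrow> real"
  assumes f: "f \<in> borel_measurable borel" "\<And>x. 0 \<le> f x"
    and K: "K \<in> sets borel" "emeasure lborel K = ennreal m" "0 < m" "\<And>x. x \<in> K \<Longrightarrow> t \<le> f x"
    and level: "emeasure lborel {x. t / 2 ^ (k + 1) < f x} \<le> ennreal (M * m)"
    and \<rho>: "0 < \<rho>" "unit_ball_vol (real DIM('a)) * \<rho> ^ DIM('a) = 2 * real k * M * m"
    and "0 < t" "0 < M" "0 < p" "0 < q" "0 \<le> \<beta>"
  shows "ennreal ((t / 2 * (m / 4) powr (1 / p)) powr q * \<rho> powr (- (real DIM('a) + \<beta> * q))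
                  * (k * M * m / 2))
           \<le> besov_energy k p q \<beta> f" (is "ennreal (?w * _) \<le> _")
proof -
  define A where "A = {x. t / 2 ^ (k + 1) < f x}"
  define B where "B = cball (0::'a) \<rho> - {0}"
  have A: "A \<in> sets borel"
    unfolding A_def using f(1) by measurable
  have "emeasure lborel B = emeasure lborel (cball (0::'a) \<rho>)"
    unfolding B_def by (rule emeasure_Diff_null_set) auto
  then have B: "B \<in> sets borel" "emeasure lborel B = ennreal (2 * real k * M * m)"
    unfolding B_def using \<rho> by (simp_all add: emeasure_cball)
  obtain S where S: "S \<in> sets lborel" "S \<subseteq> B" "ennreal (k * M * m / 2) \<le> emeasure lborel S"
    "\<And>h. h \<in> S \<Longrightarrow> ennreal (m / 4) \<le> emeasure lborel {x \<in> K. \<forall>j\<in>{1..k}. x + real j *\<^sub>R h \<notin> A}"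
    using good_steps_exist[OF A level[folded A_def] B K(1-3) \<open>0 < M\<close>] by blast
  have "ennreal (?w * (k * M * m / 2)) = ennreal ?w * ennreal (k * M * m / 2)"
    using \<open>0 < M\<close> K(3) by (intro ennreal_mult) auto
  also have "\<dots> \<le> ennreal ?w * emeasure lborel S"
    using S(3) by (rule mult_left_mono) simp
  also have "\<dots> \<le> besov_energy k p q \<beta> f"
  proof (rule besov_energy_ge_on_set[OF _ _ _ S(1)])
    show "h \<noteq> 0 \<and> norm h \<le> \<rho>" if "h \<in> S" for h
      using that S(2) unfolding B_def by auto
    show "ennreal (t / 2 * (m / 4) powr (1 / p)) \<le> Lp_norm p (fdiff k h f)" if "h \<in> S" for h
    proof (rule Lp_norm_ge_level[OF _ _ _ _ S(4)[OF that]])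
      show "{x \<in> K. \<forall>j\<in>{1..k}. x + real j *\<^sub>R h \<notin> A} \<in> sets lborel"
        using A K(1) by measurable
      show "t / 2 \<le> \<bar>fdiff k h f x\<bar>" if "x \<in> {x \<in> K. \<forall>j\<in>{1..k}. x + real j *\<^sub>R h \<notin> A}" for x
        using that K(4) f(2) \<open>0 < t\<close> unfolding A_def
        by (intro abs_fdiff_ge_half) (auto simp: not_less)
    qed (use \<open>0 < t\<close> \<open>0 < p\<close> K(3) in auto)
  qed (use \<open>0 < t\<close> \<open>0 < q\<close> \<open>0 \<le> \<beta>\<close> in auto)
  finally show ?thesis .
qed

lemma single_scale_bound_eq:
  fixes t m b d n p q \<beta> :: real
  assumes "0 < t" "0 < m" "0 < b" "0 < n"
  shows "(t / 2 * (m / 4) powr (1 / p)) powr q * ((b * m) powr (1 / n)) powr (- (n + \<beta> * q)) * (d * m)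
       = 2 powr (- q) * 4 powr (- (q / p)) * b powr (- 1 - \<beta> * q / n) * d
         * t powr q * m powr (q / p - \<beta> * q / n)"
proof -
  have "(t / 2 * (m / 4) powr (1 / p)) powr q = 2 powr (- q) * 4 powr (- (q / p)) * t powr q * m powr (q / p)"
    using assms by (simp add: powr_mult powr_powr powr_divide powr_minus_divide)
  moreover have "((b * m) powr (1 / n)) powr (- (n + \<beta> * q)) = b powr (- 1 - \<beta> * q / n) * m powr (- 1 - \<beta> * q / n)"
    using assms by (simp add: powr_powr powr_mult field_simps)
  moreover have "m powr (q / p) * m powr (- 1 - \<beta> * q / n) * m = m powr (q / p - \<beta> * q / n)"
    using assms by (simp add: powr_add[symmetric] mult.commute[of _ m] powr_mult_base)
  ultimately show ?thesis
    by (simp add: ac_simps)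
qed

lemma besov_energy_ge_single_scale_power:
  assumes "1 \<le> k" "0 < M" "0 < p" "0 < q" "0 \<le> \<beta>"
  obtains c where "0 < c"
    "\<And>(f::'a::euclidean_space \<Rightarrow> real) t K m. f \<in> borel_measurable borel \<Longrightarrow> (\<And>x. 0 \<le> f x) \<Longrightarrow> 0 < t \<Longrightarrow>
       K \<in> sets borel \<Longrightarrow> (\<And>x. x \<in> K \<Longrightarrow> t \<le> f x) \<Longrightarrow> emeasure lborel K = ennreal m \<Longrightarrow> 0 < m \<Longrightarrow>
       emeasure lborel {x. t / 2 ^ (k + 1) < f x} \<le> ennreal (M * m) \<Longrightarrow>
       ennreal (c * t powr q * m powr (q / p - \<beta> * q / real DIM('a))) \<le> besov_energy k p q \<beta> f"
proof -
  define n where "n = real DIM('a)"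
  define b where "b = 2 * real k * M / unit_ball_vol n"
  have "0 < n" "0 < unit_ball_vol n"
    unfolding n_def by simp_all
  then have "0 < b"
    unfolding b_def using assms(1,2) by simp
  show ?thesis
  proof (rule that)
    show "0 < 2 powr (- q) * 4 powr (- (q / p)) * b powr (- 1 - \<beta> * q / n) * (real k * M / 2)"
      using \<open>0 < b\<close> assms(1,2) by simp
    fix f :: "'a \<Rightarrow> real" and t K m
    assume f: "f \<in> borel_measurable borel" "\<And>x. 0 \<le> f x" and "0 < t"
      and K: "K \<in> sets borel" "\<And>x. x \<in> K \<Longrightarrow> t \<le> f x" "emeasure lborel K = ennreal m" "0 < m"
      and level: "emeasure lborel {x. t / 2 ^ (k + 1) < f x} \<le> ennreal (M * m)"
    define \<rho> where "\<rho> = (b * m) powr (1 / n)"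
    have "\<rho> ^ DIM('a) = b * m"
      unfolding \<rho>_def n_def using \<open>0 < b\<close> \<open>0 < m\<close> by (simp add: powr_realpow[symmetric] powr_powr)
    then have "unit_ball_vol n * \<rho> ^ DIM('a) = 2 * real k * M * m"
      unfolding b_def using \<open>0 < unit_ball_vol n\<close> by simp
    then have "ennreal ((t / 2 * (m / 4) powr (1 / p)) powr q * \<rho> powr (- (n + \<beta> * q)) * (real k * M / 2 * m))
                 \<le> besov_energy k p q \<beta> f"
      using besov_energy_ge_single_scale[OF f K(1,3,4,2) level, of \<rho> p q \<beta>] assms \<open>0 < t\<close> \<open>0 < b\<close> K(4)
      unfolding n_def \<rho>_def by (simp add: ac_simps)
    then show "ennreal (2 powr (- q) * 4 powr (- (q / p)) * b powr (- 1 - \<beta> * q / n) * (real k * M / 2)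
                 * t powr q * m powr (q / p - \<beta> * q / real DIM('a))) \<le> besov_energy k p q \<beta> f"
      unfolding \<rho>_def n_def[symmetric] single_scale_bound_eq[OF \<open>0 < t\<close> \<open>0 < m\<close> \<open>0 < b\<close> \<open>0 < n\<close>] .
  qed
qed

lemma powr_level_shift_le:
  fixes \<epsilon> M t m a c q \<gamma> :: real
  assumes "\<epsilon> powr q * M powr \<gamma> = 1" "0 < \<epsilon>" "0 < t" "0 < M" "0 < m" "M * m \<le> a" "0 \<le> c" "0 \<le> \<gamma>"
  shows "c * t powr q * m powr \<gamma> \<le> c * (\<epsilon> * t) powr q * a powr \<gamma>"
proof -
  have "c * t powr q * m powr \<gamma> = c * (\<epsilon> powr q * M powr \<gamma>) * t powr q * m powr \<gamma>"
    using assms(1) by simp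
  also have "\<dots> = c * (\<epsilon> * t) powr q * (M * m) powr \<gamma>"
    using assms(2-5) by (simp add: powr_mult)
  also have "\<dots> \<le> c * (\<epsilon> * t) powr q * a powr \<gamma>"
    using assms(4-8) by (intro mult_left_mono powr_mono2) auto
  finally show ?thesis .
qed

text \<open>If the next level set {f > \<epsilon> t} is too large, pass to it: since \<epsilon>^q M^\<gamma> = 1 this
  loses nothing, and it can happen only finitely often because {f > 0} has finite measure.\<close>
lemma level_set_iteration:
  fixes f :: "'a::euclidean_space \<Rightarrow> real"
  assumes f: "f \<in> borel_measurable borel" "emeasure lborel {x. 0 < f x} \<le> ennreal V"
    and "0 < \<epsilon>" "1 < M" "0 \<le> c" "0 \<le> \<gamma>" "\<epsilon> powr q * M powr \<gamma> = 1"
    and single: "\<And>t K m. 0 < t \<Longrightarrow> K \<in> sets borel \<Longrightarrow> (\<And>x. x \<in> K \<Longrightarrow> t \<le> f x) \<Longrightarrow>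
        emeasure lborel K = ennreal m \<Longrightarrow> 0 < m \<Longrightarrow> emeasure lborel {x. \<epsilon> * t < f x} \<le> ennreal (M * m) \<Longrightarrow>
        ennreal (c * t powr q * m powr \<gamma>) \<le> I"
    and K: "0 < t" "K \<in> sets borel" "\<And>x. x \<in> K \<Longrightarrow> t \<le> f x" "emeasure lborel K = ennreal m" "0 < m"
  shows "ennreal (c * t powr q * m powr \<gamma>) \<le> I"
proof -
  have level_le: "emeasure lborel {x. \<epsilon> * t < f x} \<le> ennreal V" if "0 < t" for t
  proof -
    have "emeasure lborel {x. \<epsilon> * t < f x} \<le> emeasure lborel {x. 0 < f x}"
      using f(1) \<open>0 < \<epsilon>\<close> that by (intro emeasure_mono) (auto intro: less_trans[rotated])
    then show ?thesis
      using f(2) by (rule order.trans)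
  qed
  obtain N where "V / m < M ^ N"
    using real_arch_pow[OF \<open>1 < M\<close>] by blast
  then have "V \<le> M ^ N * m"
    using K(5) by (simp add: field_simps)
  with K show ?thesis
  proof (induction N arbitrary: t K m)
    case 0
    have "V \<le> M * m"
      using 0 \<open>1 < M\<close> by (simp add: order.trans[OF _ mult_right_mono[of 1 M m]])
    then show ?case
      using 0 level_le[OF \<open>0 < t\<close>] by (intro single) (auto intro: order.trans ennreal_leI)
  next
    case (Suc N)
    show ?case
    proof (cases "emeasure lborel {x. \<epsilon> * t < f x} \<le> ennreal (M * m)")
      case True
      then show ?thesis
        using Suc.prems by (intro single) auto
    next
      case False
      define A where "A = {x. \<epsilon> * t < f x}"
      obtain a where a: "emeasure lborel A = ennreal a" "0 \<le> a"
        using level_le[OF Suc.prems(1)] unfolding A_def[symmetric]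
        by (cases "emeasure lborel A" rule: ennreal_cases) (auto simp: top_unique)
      have "M * m < a"
        using False a unfolding A_def[symmetric] by (metis ennreal_leI linorder_not_le)
      then have "0 < a"
        using \<open>1 < M\<close> Suc.prems(5) by (smt (verit) mult_pos_pos)
      have "V \<le> M ^ N * (M * m)"
        using Suc.prems(6) by (simp add: algebra_simps)
      also have "\<dots> \<le> M ^ N * a"
        using \<open>M * m < a\<close> \<open>1 < M\<close> by (intro mult_left_mono) auto
      finally have "ennreal (c * (\<epsilon> * t) powr q * a powr \<gamma>) \<le> I"
        using Suc.IH[of "\<epsilon> * t" A a] f(1) a \<open>0 < a\<close> \<open>0 < \<epsilon>\<close> Suc.prems(1) by (auto simp: A_def)
      moreover have "c * t powr q * m powr \<gamma> \<le> c * (\<epsilon> * t) powr q * a powr \<gamma>"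
        using powr_level_shift_le[of \<epsilon> q M \<gamma> t m a c] assms(3-7) Suc.prems(1,5) \<open>M * m < a\<close> by simp
      ultimately show ?thesis
        using ennreal_leI order.trans by blast
    qed
  qed
qed

lemma besov_energy_ge_measure_power:
  assumes "1 \<le> k" "0 < p" "0 < q" "0 \<le> \<beta>" "p * \<beta> < real DIM('a::euclidean_space)"
  obtains c where "0 < c"
    "\<And>(f::'a \<Rightarrow> real) K. f \<in> borel_measurable borel \<Longrightarrow> (\<And>x. 0 \<le> f x) \<Longrightarrow>
       emeasure lborel {x. 0 < f x} < \<infinity> \<Longrightarrow> K \<in> sets borel \<Longrightarrow> (\<And>x. x \<in> K \<Longrightarrow> 1 \<le> f x) \<Longrightarrow>
       ennreal c * ennpow (emeasure lborel K) (q / p - \<beta> * q / real DIM('a)) \<le> besov_energy k p q \<beta> f"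
proof -
  define \<gamma> where "\<gamma> = q / p - \<beta> * q / real DIM('a)"
  define \<epsilon> :: real where "\<epsilon> = 1 / 2 ^ (k + 1)"
  define M where "M = (1 / \<epsilon>) powr (q / \<gamma>)"
  have "\<beta> * q / real DIM('a) < q / p"
    using assms by (simp add: field_simps)
  then have "0 < \<gamma>"
    unfolding \<gamma>_def by simp
  have "(1::real) < 2 ^ (k + 1)"
    by (rule one_less_power) auto
  then have "0 < \<epsilon>" "\<epsilon> < 1"
    unfolding \<epsilon>_def by auto
  then have "1 < M"
    unfolding M_def using \<open>0 < \<gamma>\<close> assms(3) by (intro gr_one_powr) (auto simp: field_simps)
  have scale: "\<epsilon> powr q * M powr \<gamma> = 1"
    unfolding M_def using \<open>0 < \<epsilon>\<close> \<open>0 < \<gamma>\<close> by (simp add: powr_powr powr_divide)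
  obtain c where c: "0 < c"
    "\<And>(f::'a \<Rightarrow> real) t K m. f \<in> borel_measurable borel \<Longrightarrow> (\<And>x. 0 \<le> f x) \<Longrightarrow> 0 < t \<Longrightarrow>
       K \<in> sets borel \<Longrightarrow> (\<And>x. x \<in> K \<Longrightarrow> t \<le> f x) \<Longrightarrow> emeasure lborel K = ennreal m \<Longrightarrow> 0 < m \<Longrightarrow>
       emeasure lborel {x. \<epsilon> * t < f x} \<le> ennreal (M * m) \<Longrightarrow>
       ennreal (c * t powr q * m powr \<gamma>) \<le> besov_energy k p q \<beta> f"
    using besov_energy_ge_single_scale_power[OF assms(1) _ assms(2-4), of M] \<open>1 < M\<close>
    unfolding \<gamma>_def \<epsilon>_def by auto
  show ?thesis
  proof (rule that[OF \<open>0 < c\<close>])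
    fix f :: "'a \<Rightarrow> real" and K
    assume f: "f \<in> borel_measurable borel" "\<And>x. 0 \<le> f x" "emeasure lborel {x. 0 < f x} < \<infinity>"
      and K: "K \<in> sets borel" "\<And>x. x \<in> K \<Longrightarrow> 1 \<le> f x"
    obtain V where V: "emeasure lborel {x. 0 < f x} = ennreal V"
      using f(3) by (cases "emeasure lborel {x. 0 < f x}" rule: ennreal_cases) auto
    have "emeasure lborel K \<le> emeasure lborel {x. 0 < f x}"
      using f(1) K by (intro emeasure_mono) (auto intro: less_le_trans[OF zero_less_one])
    then obtain m where m: "emeasure lborel K = ennreal m" "0 \<le> m"
      using V by (cases "emeasure lborel K" rule: ennreal_cases) (auto simp: top_unique)
    show "ennreal c * ennpow (emeasure lborel K) (q / p - \<beta> * q / real DIM('a)) \<le> besov_energy k p q \<beta> f"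
    proof (cases "m = 0")
      case True
      then show ?thesis
        using m \<open>0 < \<gamma>\<close> by (simp add: ennpow_zero flip: \<gamma>_def)
    next
      case False
      with m have "0 < m" by simp
      have "ennreal (c * 1 powr q * m powr \<gamma>) \<le> besov_energy k p q \<beta> f"
      proof (rule level_set_iteration[where \<epsilon> = \<epsilon> and M = M and c = c and \<gamma> = \<gamma> and q = q])
        show "ennreal (c * t powr q * m' powr \<gamma>) \<le> besov_energy k p q \<beta> f"
          if "0 < t" "K' \<in> sets borel" "\<And>x. x \<in> K' \<Longrightarrow> t \<le> f x" "emeasure lborel K' = ennreal m'"
            "0 < m'" "emeasure lborel {x. \<epsilon> * t < f x} \<le> ennreal (M * m')" for t K' m'
          using c(2)[OF f(1,2) that] .
      qed (use f(1) V K m(1) \<open>0 < m\<close> \<open>0 < \<epsilon>\<close> \<open>1 < M\<close> \<open>0 < c\<close> \<open>0 < \<gamma>\<close> scale in auto)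
      moreover have "ennreal c * ennpow (emeasure lborel K) \<gamma> = ennreal (c * 1 powr q * m powr \<gamma>)"
        using m \<open>0 < c\<close> by (simp add: ennpow_ennreal ennreal_mult)
      ultimately show ?thesis
        by (simp flip: \<gamma>_def)
    qed
  qed
qed

lemma C0_inf_continuous: "f \<in> C0_inf \<Longrightarrow> continuous_on UNIV f"
  unfolding C0_inf_def smooth_fun_def
  by (blast intro: continuous_at_imp_continuous_on differentiable_imp_continuous_within)

lemma C0_inf_bounded_support: "f \<in> C0_inf \<Longrightarrow> bounded {x. f x \<noteq> 0}"
  unfolding C0_inf_def using bounded_closure_image compact_imp_bounded bounded_subset closure_subset
  by blast

lemma besov_norm_power_ge_measure_power:
  assumes "0 \<le> \<beta>" "0 < p" "0 < q" "p * \<beta> < real DIM('a::euclidean_space)"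
  obtains c where "0 < c"
    "\<And>(f::'a \<Rightarrow> real) K. f \<in> C0_inf \<Longrightarrow> K \<in> sets borel \<Longrightarrow> (\<And>x. indicator K x \<le> f x) \<Longrightarrow>
       ennreal c * ennpow (emeasure lborel K) ((real DIM('a) - p * \<beta>) / real DIM('a))
         \<le> ennpow (besov_norm p q \<beta> f) p"
proof -
  define k where "k = nat (1 + \<lfloor>\<beta>\<rfloor>)"
  define \<gamma> where "\<gamma> = q / p - \<beta> * q / real DIM('a)"
  have "1 \<le> k"
    unfolding k_def using assms(1) by linarith
  have "\<beta> * q / real DIM('a) < q / p"
    using assms by (simp add: field_simps)
  then have "0 < \<gamma>"
    unfolding \<gamma>_def by simp
  have exponent: "\<gamma> * p / q = (real DIM('a) - p * \<beta>) / real DIM('a)"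
    unfolding \<gamma>_def using assms by (simp add: field_simps)
  obtain c where c: "0 < c"
    "\<And>(f::'a \<Rightarrow> real) K. f \<in> borel_measurable borel \<Longrightarrow> (\<And>x. 0 \<le> f x) \<Longrightarrow>
       emeasure lborel {x. 0 < f x} < \<infinity> \<Longrightarrow> K \<in> sets borel \<Longrightarrow> (\<And>x. x \<in> K \<Longrightarrow> 1 \<le> f x) \<Longrightarrow>
       ennreal c * ennpow (emeasure lborel K) \<gamma> \<le> besov_energy k p q \<beta> f"
    using besov_energy_ge_measure_power[OF \<open>1 \<le> k\<close> assms(2,3,1,4)] unfolding \<gamma>_def by blast
  show ?thesis
  proof (rule that)
    show "0 < c powr (p / q)"
      using c(1) by simp
    fix f :: "'a \<Rightarrow> real" and K
    assume f: "f \<in> C0_inf" and K: "K \<in> sets borel" and f_ge: "\<And>x. indicator K x \<le> f x"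
    have "f \<in> borel_measurable borel"
      using C0_inf_continuous[OF f] by (rule borel_measurable_continuous_onI)
    moreover have "0 \<le> f x" for x
      using f_ge[of x] by (metis indicator_pos_le order.trans)
    moreover have "1 \<le> f x" if "x \<in> K" for x
      using f_ge[of x] that by simp
    moreover have "emeasure lborel {x. 0 < f x} < \<infinity>"
      using C0_inf_bounded_support[OF f] by (intro emeasure_bounded_finite) (auto elim: bounded_subset)
    ultimately have "ennreal c * ennpow (emeasure lborel K) \<gamma> \<le> besov_energy k p q \<beta> f"
      using K by (intro c(2))
    then have "ennpow (ennreal c * ennpow (emeasure lborel K) \<gamma>) (p / q) \<le> ennpow (besov_energy k p q \<beta> f) (p / q)"
      using assms by (intro ennpow_mono) auto
    then show "ennreal (c powr (p / q)) * ennpow (emeasure lborel K) ((real DIM('a) - p * \<beta>) / real DIM('a))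
                 \<le> ennpow (besov_norm p q \<beta> f) p"
      using assms c(1) \<open>0 < \<gamma>\<close>
      by (simp add: besov_norm_eq_energy k_def[symmetric] ennpow_ennreal_mult ennpow_ennpow exponent)
  qed
qed

lemma besov_capK_ge_measure_power:
  assumes "0 \<le> \<beta>" "0 < p" "0 < q" "p * \<beta> < real DIM('a::euclidean_space)"
  obtains c where "0 < c"
    "\<And>K::'a set. K \<in> sets borel \<Longrightarrow>
       ennreal c * ennpow (emeasure lborel K) ((real DIM('a) - p * \<beta>) / real DIM('a)) \<le> besov_capK p q \<beta> K"
proof -
  obtain c where c: "0 < c"
    "\<And>(f::'a \<Rightarrow> real) K. f \<in> C0_inf \<Longrightarrow> K \<in> sets borel \<Longrightarrow> (\<And>x. indicator K x \<le> f x) \<Longrightarrow>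
       ennreal c * ennpow (emeasure lborel K) ((real DIM('a) - p * \<beta>) / real DIM('a))
         \<le> ennpow (besov_norm p q \<beta> f) p"
    using besov_norm_power_ge_measure_power[OF assms] by blast
  show ?thesis
  proof (rule that[OF c(1)])
    fix K :: "'a set"
    assume "K \<in> sets borel"
    then show "ennreal c * ennpow (emeasure lborel K) ((real DIM('a) - p * \<beta>) / real DIM('a))
                 \<le> besov_capK p q \<beta> K"
      unfolding besov_capK_def using c(2) by (intro INF_greatest) auto
  qed
qed

lemma besov_capK_le_besov_cap: "compact T \<Longrightarrow> T \<subseteq> E \<Longrightarrow> besov_capK p q \<beta> T \<le> besov_cap p q \<beta> E"
  unfolding besov_cap_def by (intro INF_greatest SUP_upper) auto

lemma bounded_contains_compact_half_measure:
  fixes W :: "'a::euclidean_space set"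
  assumes "W \<in> sets borel" "bounded W"
  obtains T where "compact T" "T \<subseteq> W" "emeasure lborel W \<le> 2 * emeasure lborel T"
proof (cases "emeasure lborel W = 0")
  case True
  then show ?thesis
    using that[of "{}"] by simp
next
  case False
  then obtain v where v: "emeasure lborel W = ennreal v" "0 < v"
    using emeasure_bounded_finite[OF assms(2)]
    by (cases "emeasure lborel W" rule: ennreal_cases) (auto simp: not_less)
  have "W \<in> sets lebesgue" "0 < v / 2"
    using assms(1) v(2) by simp_all
  then obtain T where T: "closed T" "T \<subseteq> W" "emeasure lebesgue (W - T) < ennreal (v / 2)"
    using sets_lebesgue_inner_closed by metis
  have "compact T"
    using T(1,2) assms(2) bounded_subset compact_eq_bounded_closed by blast
  then obtain \<tau> where \<tau>: "emeasure lborel T = ennreal \<tau>" "0 \<le> \<tau>"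
    using emeasure_compact_finite[of T] by (cases "emeasure lborel T" rule: ennreal_cases) auto
  have "T \<in> sets borel"
    using T(1) by simp
  have "ennreal v \<le> emeasure lborel T + emeasure lborel (W - T)"
    using emeasure_subadditive[of T lborel "W - T"] assms(1) \<open>T \<in> sets borel\<close> T(2) v(1)
    by (simp add: Un_absorb1)
  also have "\<dots> \<le> ennreal (\<tau> + v / 2)"
    using T(3) assms(1) \<open>T \<in> sets borel\<close> \<tau> v(2) by (simp add: ennreal_plus add_left_mono)
  finally have "v \<le> 2 * \<tau>"
    using \<tau>(2) v(2) by (simp add: ennreal_le_iff ennreal_plus[symmetric] del: ennreal_plus)
  then have "emeasure lborel W \<le> 2 * emeasure lborel T"
    using v(1) \<tau> ennreal_leI[of v "2 * \<tau>"] ennreal_mult[of 2 \<tau>] by simp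
  with \<open>compact T\<close> T(2) show ?thesis
    by (rule that)
qed

lemma besov_cap_open_ge_measure_power:
  fixes W :: "'a::euclidean_space set"
  assumes c: "0 < c" "\<And>K::'a set. K \<in> sets borel \<Longrightarrow> ennreal c * ennpow (emeasure lborel K) e \<le> besov_capK p q \<beta> K"
    and "0 < e" "open W" "bounded W"
  shows "ennreal (c * 2 powr (- e)) * ennpow (emeasure lborel W) e \<le> besov_cap p q \<beta> W"
proof -
  obtain T where T: "compact T" "T \<subseteq> W" "emeasure lborel W \<le> 2 * emeasure lborel T"
    using bounded_contains_compact_half_measure assms(4,5) by (metis borel_open)
  have "ennreal (c * 2 powr (- e)) * ennpow (emeasure lborel W) e
          \<le> ennreal (c * 2 powr (- e)) * ennpow (ennreal 2 * emeasure lborel T) e"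
    using T(3) \<open>0 < e\<close> by (intro mult_left_mono ennpow_mono) auto
  also have "\<dots> = ennreal (c * 2 powr (- e)) * (ennreal (2 powr e) * ennpow (emeasure lborel T) e)"
    using \<open>0 < e\<close> by (subst ennpow_ennreal_mult) auto
  also have "\<dots> = ennreal c * ennpow (emeasure lborel T) e"
  proof -
    have "ennreal (c * 2 powr (- e)) * ennreal (2 powr e) = ennreal c"
      using c(1) by (simp add: ennreal_mult[symmetric] powr_minus)
    then show ?thesis
      by (simp add: mult.assoc[symmetric])
  qed
  also have "\<dots> \<le> besov_capK p q \<beta> T"
    using T(1) by (intro c(2)) (simp add: compact_imp_closed)
  also have "\<dots> \<le> besov_cap p q \<beta> W"
    using T(1,2) by (rule besov_capK_le_besov_cap)
  finally show ?thesis .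
qed

lemma measure_power_le_besov_capK_closure:
  assumes "0 \<le> \<beta>" "0 < p" "0 < q" "p * \<beta> < real DIM('a::euclidean_space)"
  obtains C where "0 < C"
    "\<And>U::'a set. ennpow (emeasure lborel U) ((real DIM('a) - p * \<beta>) / real DIM('a))
                   \<le> ennreal C * besov_capK p q \<beta> (closure U)"
proof -
  obtain c where c: "0 < c"
    "\<And>K::'a set. K \<in> sets borel \<Longrightarrow>
       ennreal c * ennpow (emeasure lborel K) ((real DIM('a) - p * \<beta>) / real DIM('a)) \<le> besov_capK p q \<beta> K"
    using besov_capK_ge_measure_power[OF assms] by blast
  show ?thesis
  proof (rule that)
    show "0 < 1 / c"
      using c(1) by simp
    fix U :: "'a set"
    have "0 < (real DIM('a) - p * \<beta>) / real DIM('a)"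
      using assms(4) by simp
    then have "ennpow (emeasure lborel U) ((real DIM('a) - p * \<beta>) / real DIM('a))
                 \<le> ennpow (emeasure lborel (closure U)) ((real DIM('a) - p * \<beta>) / real DIM('a))"
      by (intro ennpow_mono emeasure_mono closure_subset) (auto intro: borel_closed)
    also have "\<dots> \<le> ennreal (1 / c) * besov_capK p q \<beta> (closure U)"
      using c by (intro ennreal_le_inverse_mult) auto
    finally show "ennpow (emeasure lborel U) ((real DIM('a) - p * \<beta>) / real DIM('a))
                    \<le> ennreal (1 / c) * besov_capK p q \<beta> (closure U)" .
  qed
qed

lemma lorentz_norm_le_of_level_sets:
  assumes "0 < q0" "0 < D"
    and levels: "\<And>t. 0 < t \<Longrightarrow> ennpow (\<mu> {x. \<bar>g x\<bar> > t}) (q0 / s) \<le> ennreal D * ennpow (\<nu> {x. \<bar>g x\<bar> > t}) (q0 / r)"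
  shows "lorentz_norm s q0 \<mu> g \<le> ennreal (D powr (1 / q0)) * lorentz_norm r q0 \<nu> g"
proof -
  let ?F = "\<lambda>\<mu> s t. ennpow (\<mu> {x. \<bar>g x\<bar> > t}) (q0 / s) * ennreal (q0 * t powr (q0 - 1))"
  have "(\<integral>\<^sup>+t \<in> {0<..}. ?F \<mu> s t \<partial>lborel) \<le> (\<integral>\<^sup>+t. ennreal D * (?F \<nu> r t * indicator {0<..} t) \<partial>lborel)"
  proof (intro nn_integral_mono)
    fix t :: real
    show "?F \<mu> s t * indicator {0<..} t \<le> ennreal D * (?F \<nu> r t * indicator {0<..} t)"
      using levels[of t] by (cases "0 < t") (simp_all add: mult.assoc[symmetric] mult_right_mono)
  qed
  also have "\<dots> \<le> ennreal D * (\<integral>\<^sup>+t \<in> {0<..}. ?F \<nu> r t \<partial>lborel)"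
    using \<open>0 < D\<close> by (intro nn_integral_cmult_le) simp
  finally have "ennpow (\<integral>\<^sup>+t \<in> {0<..}. ?F \<mu> s t \<partial>lborel) (1 / q0)
                  \<le> ennpow (ennreal D * (\<integral>\<^sup>+t \<in> {0<..}. ?F \<nu> r t \<partial>lborel)) (1 / q0)"
    using \<open>0 < q0\<close> by (intro ennpow_mono) auto
  then show ?thesis
    unfolding lorentz_norm_def using assms(1,2) by (simp add: ennpow_ennreal_mult)
qed

lemma lorentz_norm_le_lorentz_besov_cap:
  assumes "0 \<le> \<beta>" "0 < p" "0 < q" "p * \<beta> < real DIM('a::euclidean_space)" "0 < q0"
  obtains C where "0 < C"
    "\<And>f::'a \<Rightarrow> real. continuous_on UNIV f \<Longrightarrow> bounded {x. f x \<noteq> 0} \<Longrightarrow>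
       lorentz_norm (real DIM('a) * p / (real DIM('a) - p * \<beta>)) q0 (emeasure lborel) f
         \<le> ennreal C * lorentz_norm p q0 (besov_cap p q \<beta>) f"
proof -
  define e where "e = (real DIM('a) - p * \<beta>) / real DIM('a)"
  have "0 < e"
    unfolding e_def using assms(4) by simp
  obtain c where c: "0 < c"
    "\<And>K::'a set. K \<in> sets borel \<Longrightarrow> ennreal c * ennpow (emeasure lborel K) e \<le> besov_capK p q \<beta> K"
    using besov_capK_ge_measure_power[OF assms(1-4)] unfolding e_def by blast
  define D where "D = (1 / (c * 2 powr (- e))) powr (q0 / p)"
  have "0 < D"
    unfolding D_def using c(1) by simp
  show ?thesis
  proof (rule that)
    show "0 < D powr (1 / q0)"
      using \<open>0 < D\<close> by simp
    fix f :: "'a \<Rightarrow> real"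
    assume f: "continuous_on UNIV f" "bounded {x. f x \<noteq> 0}"
    show "lorentz_norm (real DIM('a) * p / (real DIM('a) - p * \<beta>)) q0 (emeasure lborel) f
            \<le> ennreal (D powr (1 / q0)) * lorentz_norm p q0 (besov_cap p q \<beta>) f"
    proof (rule lorentz_norm_le_of_level_sets[OF \<open>0 < q0\<close> \<open>0 < D\<close>])
      fix t :: real
      assume "0 < t"
      define W where "W = {x. \<bar>f x\<bar> > t}"
      have "open W"
        unfolding W_def using f(1) by (intro open_Collect_less continuous_intros) auto
      moreover have "bounded W"
        unfolding W_def by (rule bounded_subset[OF f(2)]) (use \<open>0 < t\<close> in auto)
      ultimately have "ennreal (c * 2 powr (- e)) * ennpow (emeasure lborel W) e \<le> besov_cap p q \<beta> W"
        using c \<open>0 < e\<close> by (intro besov_cap_open_ge_measure_power)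
      then have "ennpow (emeasure lborel W) e \<le> ennreal (1 / (c * 2 powr (- e))) * besov_cap p q \<beta> W"
        using c(1) by (intro ennreal_le_inverse_mult) auto
      then have "ennpow (ennpow (emeasure lborel W) e) (q0 / p)
                   \<le> ennpow (ennreal (1 / (c * 2 powr (- e))) * besov_cap p q \<beta> W) (q0 / p)"
        using assms by (intro ennpow_mono) auto
      moreover have "q0 / (real DIM('a) * p / (real DIM('a) - p * \<beta>)) = e * (q0 / p)"
        unfolding e_def using assms(2) by (simp add: field_simps)
      ultimately show "ennpow (emeasure lborel W) (q0 / (real DIM('a) * p / (real DIM('a) - p * \<beta>)))
                         \<le> ennreal D * ennpow (besov_cap p q \<beta> W) (q0 / p)"
        unfolding D_def using assms c(1) \<open>0 < e\<close> by (simp add: ennpow_ennpow ennpow_ennreal_mult)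
    qed
  qed
qed

theorem theorem4p2:
  fixes \<beta> p q q0 :: real
  assumes "0 < \<beta>" "\<beta> < real DIM('a::euclidean_space)"
    and "0 < q" and "1 \<le> p" and "p < real DIM('a) / \<beta>" and "0 < q0"
  shows "((\<exists>C>0. \<forall>f::'a \<Rightarrow> real. f \<in> C0_inf \<longrightarrow>
             lorentz_norm (real DIM('a) * p / (real DIM('a) - p * \<beta>)) q0
                (emeasure lborel) f
             \<le> ennreal C * lorentz_norm p q0 (besov_cap p q \<beta>) f)
          \<longleftrightarrow>
          (\<exists>C>0. \<forall>U::'a set. smooth_bdd_domain U \<longrightarrow>
             ennpow (emeasure lborel U) ((real DIM('a) - p * \<beta>) / real DIM('a))
             \<le> ennreal C * besov_capK p q \<beta> (closure U)))
       \<and> (p \<le> q \<longrightarrow>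
          (\<exists>C>0. \<forall>f::'a \<Rightarrow> real. f \<in> C0_inf \<longrightarrow>
             lorentz_norm (real DIM('a) * p / (real DIM('a) - p * \<beta>)) q0
                (emeasure lborel) f
             \<le> ennreal C * lorentz_norm p q0 (besov_cap p q \<beta>) f)
          \<and>
          (\<exists>C>0. \<forall>U::'a set. smooth_bdd_domain U \<longrightarrow>
             ennpow (emeasure lborel U) ((real DIM('a) - p * \<beta>) / real DIM('a))
             \<le> ennreal C * besov_capK p q \<beta> (closure U)))"
proof -
  have parameters: "0 \<le> \<beta>" "0 < p" "0 < q" "p * \<beta> < real DIM('a)"
    using assms(1,3,4,5) by (simp_all add: field_simps)
  have "\<exists>C>0. \<forall>f::'a \<Rightarrow> real. f \<in> C0_inf \<longrightarrow>
          lorentz_norm (real DIM('a) * p / (real DIM('a) - p * \<beta>)) q0 (emeasure lborel) f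
            \<le> ennreal C * lorentz_norm p q0 (besov_cap p q \<beta>) f"
    by (rule lorentz_norm_le_lorentz_besov_cap[OF parameters assms(6)])
       (use C0_inf_continuous C0_inf_bounded_support in blast)
  moreover have "\<exists>C>0. \<forall>U::'a set. smooth_bdd_domain U \<longrightarrow>
          ennpow (emeasure lborel U) ((real DIM('a) - p * \<beta>) / real DIM('a))
            \<le> ennreal C * besov_capK p q \<beta> (closure U)"
    by (rule measure_power_le_besov_capK_closure[OF parameters]) blast
  ultimately show ?thesis
    by blast
qed

end
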